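(* Let $q\ge 2$ be a prime power. For all $x,y\in\mathbb{F}_q$, any two distinct vertices of $\{(x,y,j)_0: j\in\mathbb{F}_q\}$ are at distance at least $6$ in $B_q$.
   Context: $\mathbb{F}_q$ is the field with $q$ elements. $B_q$ is the bipartite graph with parts $\{(x,y,z)_0: x,y,z\in\mathbb{F}_q\}$ and $\{(a,b,c)_1: a,b,c\in\mathbb{F}_q\}$, in which $(a,b,c)_1$ is adjacent exactly to $(j,\,aj+b,\,a^2j+2ab+c)_0$, $j\in\mathbb{F}_q$. *)

theory Defs
  imports Main "HOL-Library.Extended_Nat" "HOL-Library.Cardinality"
begin

text \<open>Vertices of B_q: the two parts, points (x,y,z)_0 and lines (a,b,c)_1.\<close>
datatype 'a bvert = V0 "'a \<times> 'a \<times> 'a" | V1 "'a \<times> 'a \<times> 'a"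

definition incident :: "'a::field \<times> 'a \<times> 'a \<Rightarrow> 'a \<times> 'a \<times> 'a \<Rightarrow> bool" where
  "incident l p = (case l of (a, b, c) \<Rightarrow>
      (\<exists>j. p = (j, a * j + b, a^2 * j + 2 * a * b + c)))"

definition B_edges :: "('a::field) bvert rel" where
  "B_edges = {(V1 l, V0 p) | l p. incident l p} \<union> {(V0 p, V1 l) | l p. incident l p}"

text \<open>Graph distance: length of a shortest walk (infinite if none exists).\<close>
definition B_dist :: "('a::field) bvert \<Rightarrow> 'a bvert \<Rightarrow> enat" where
  "B_dist u v = (INF n \<in> {n. (u, v) \<in> B_edges ^^ n}. enat n)"

end

theory Submission
  imports Defs
begin

(* Call {(x,y,t)_0 : t} the fibre over (x,y).  Two points of one fibre are
   at distance at least 6 because: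
   (1) a line meets every fibre in at most one point (the first two coordinates of a
       point on (a,b,c)_1 determine the third);
   (2) two lines whose point sets agree in the second coordinate at two different
       first coordinates have the same slope a and intercept b, so a common point
       forces them to coincide;
   (3) from (1) and (2): if lines l, l' pass through (x,y,z)_0 and (x,y,z')_0 and share
       a point, then z = z'.
   Since B_q is bipartite, a walk between two points has even length; walks of length
   2 and 4 between points are a common line, resp. two lines sharing a point, which
   (1) and (3) exclude for distinct points of a fibre.  Hence every walk between them
   has length at least 6, and so has the infimum defining B_dist. *)

lemma incident_iff:
  "incident (a, b, c) (j, w, t) \<longleftrightarrow> w = a * j + b \<and> t = a^2 * j + 2 * a * b + c"
  by (auto simp: incident_def)

lemma incident_fibre_unique:
  assumes "incident l (x, y, z)" and "incident l (x, y, z')"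
  shows "z = z'"
  using assms by (cases l) (auto simp: incident_iff)

lemma lines_agreeing_twice_eq:
  fixes a1 b1 c1 :: "'a::field"
  assumes ne: "j \<noteq> x"
    and agree_x: "a1 * x + b1 = a2 * x + b2"
    and Q1: "incident (a1, b1, c1) (j, w, t)" and Q2: "incident (a2, b2, c2) (j, w, t)"
  shows "(a1, b1, c1) = (a2, b2, c2)"
proof -
  from Q1 Q2 have agree_j: "a1 * j + b1 = a2 * j + b2" by (simp add: incident_iff)
  have "(a1 - a2) * (j - x) = (a1 * j + b1) - (a2 * j + b2) - ((a1 * x + b1) - (a2 * x + b2))"
    by (simp add: algebra_simps)
  with agree_j agree_x have "(a1 - a2) * (j - x) = 0" by simp
  with ne have a: "a1 = a2" by simp
  with agree_x have b: "b1 = b2" by simp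
  from Q1 Q2 a b have "c1 = c2" by (simp add: incident_iff)
  with a b show ?thesis by simp
qed

lemma common_point_same_fibre_point:
  fixes x y z z' :: "'a::field"
  assumes P: "incident l (x, y, z)" and P': "incident l' (x, y, z')"
    and Q: "incident l Q" and Q': "incident l' Q"
  shows "z = z'"
proof -
  obtain j w t where Q_def: "Q = (j, w, t)" by (cases Q) auto
  show ?thesis
  proof (cases "j = x")
    case True
    obtain a b c where l: "l = (a, b, c)" by (cases l) auto
    from P Q have "w = y" by (simp add: l Q_def True incident_iff)
    with True Q Q' P P' have "z = t" "z' = t"
      by (auto simp: Q_def intro: incident_fibre_unique)
    then show ?thesis by simp
  next
    case False
    obtain a1 b1 c1 where l: "l = (a1, b1, c1)" by (cases l) auto
    obtain a2 b2 c2 where l': "l' = (a2, b2, c2)" by (cases l') auto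
    from P P' have "a1 * x + b1 = a2 * x + b2" by (simp add: l l' incident_iff)
    from lines_agreeing_twice_eq [OF False this] Q Q' have "l = l'"
      by (simp add: l l' Q_def)
    with P P' show ?thesis by (auto intro: incident_fibre_unique)
  qed
qed

fun is_line :: "'a bvert \<Rightarrow> bool" where
  "is_line (V0 _) = False"
| "is_line (V1 _) = True"

lemma B_edges_iff:
  "(u, v) \<in> B_edges \<longleftrightarrow>
     (\<exists>l p. u = V1 l \<and> v = V0 p \<and> incident l p) \<or> (\<exists>l p. u = V0 p \<and> v = V1 l \<and> incident l p)"
  by (auto simp: B_edges_def)

lemma walk_parity:
  assumes "(u, v) \<in> (B_edges :: 'a::field bvert rel) ^^ n"
  shows "is_line v \<longleftrightarrow> (is_line u \<longleftrightarrow> even n)"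
  using assms
proof (induction n arbitrary: v)
  case 0
  then show ?case by simp
next
  case (Suc n)
  then obtain w where "(u, w) \<in> B_edges ^^ n" and "(w, v) \<in> B_edges" by auto
  with Suc.IH [of w] show ?case by (auto simp: B_edges_iff)
qed

lemma two_step_walk:
  assumes "(V0 p, V0 p') \<in> (B_edges :: 'a::field bvert rel) ^^ 2"
  shows "\<exists>l. incident l p \<and> incident l p'"
  using assms by (auto simp: numeral_2_eq_2 relcomp_unfold B_edges_iff)

lemma fibre_walk_length:
  fixes x y z z' :: "'a::field"
  assumes ne: "z \<noteq> z'" and walk: "(V0 (x, y, z), V0 (x, y, z')) \<in> B_edges ^^ n"
  shows "n \<ge> 6"
proof (rule ccontr)
  assume "\<not> n \<ge> 6"
  moreover from walk_parity [OF walk] have "even n" by simp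
  ultimately have "n = 0 \<or> n = 2 \<or> n = 4" by presburger
  then show False
  proof (elim disjE)
    assume "n = 0"
    with walk ne show False by simp
  next
    assume "n = 2"
    with walk obtain l where "incident l (x, y, z)" "incident l (x, y, z')"
      using two_step_walk by blast
    with ne show False by (blast dest: incident_fibre_unique)
  next
    assume "n = 4"
    with walk have "(V0 (x, y, z), V0 (x, y, z')) \<in> B_edges ^^ 2 O B_edges ^^ 2"
      by (simp add: relpow_add [symmetric])
    then obtain w where w1: "(V0 (x, y, z), w) \<in> B_edges ^^ 2"
      and w2: "(w, V0 (x, y, z')) \<in> B_edges ^^ 2" by auto
    from walk_parity [OF w1] obtain Q where w: "w = V0 Q" by (cases w) auto
    from w1 w2 obtain l l' where "incident l (x, y, z)" "incident l Q"
      and "incident l' Q" "incident l' (x, y, z')"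
      unfolding w by (blast dest: two_step_walk)
    with ne show False by (blast dest: common_point_same_fibre_point)
  qed
qed

theorem claim2:
  fixes q :: nat and x y z z' :: "'a::{finite, field}"
  assumes "CARD('a) = q" and "q \<ge> 2"
    and "z \<noteq> z'"
  shows "B_dist (V0 (x, y, z)) (V0 (x, y, z')) \<ge> 6"
  unfolding B_dist_def
proof (rule INF_greatest)
  fix n assume "n \<in> {n. (V0 (x, y, z), V0 (x, y, z')) \<in> (B_edges :: 'a bvert rel) ^^ n}"
  with assms(3) have "n \<ge> 6" by (blast intro: fibre_walk_length)
  then show "6 \<le> enat n" by (simp add: numeral_eq_enat)
qed

end
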